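(* Let $I\subset\mathbb{R}$ be an open interval and let $x_1,x_2,\varphi:I\to\mathbb{R}$ be smooth functions such that the curve $\gamma(u)=(x_1(u),x_2(u),\cos\varphi(u),\sin\varphi(u))$ in $\mathbb{E}^4$ is parametrized by arclength, i.e. $(x_1')^2+(x_2')^2+(\varphi')^2=1$, and such that $1-(\varphi'(u))^2\neq 0$ for all $u\in I$. Let $M$ be the surface with position vector $$X(u,v)=\big(x_1(u),\,x_2(u),\,\cos\varphi(u)\cos v-\sin\varphi(u)\sin v,\,\cos\varphi(u)\sin v+\sin\varphi(u)\cos v\big).$$ Then the mean curvature vector $\vec H$ of $M$ satisfies, at each point, $$\|\vec H\|^2=\frac{1}{4\left(1-(\varphi'(u))^2\right)^2}\left(\kappa_\gamma^2+1-2(\varphi'(u))^2-\frac{(\varphi''(u))^2}{1-(\varphi'(u))^2}\right),$$ where $\kappa_\gamma=\|\gamma''(u)\|$ is the curvature of the profile curve $\gamma$.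
   Context: With $E=\langle X_u,X_u\rangle$, $F=\langle X_u,X_v\rangle$, $G=\langle X_v,X_v\rangle$ and $W^2=EG-F^2$, the second fundamental form $h$ is the normal component of the second derivatives: $h(X_u,X_u)=(X_{uu})^\perp$, $h(X_u,X_v)=(X_{uv})^\perp$, $h(X_v,X_v)=(X_{vv})^\perp$ (orthogonal projection onto the normal plane of $M$). The mean curvature vector is $\vec H=\frac{1}{2W^2}\big(E\,h(X_v,X_v)-2F\,h(X_u,X_v)+G\,h(X_u,X_u)\big)$. *)

theory Defs
  imports "HOL-Analysis.Analysis"
begin

definition smooth_on :: "(real \<Rightarrow> real) \<Rightarrow> real set \<Rightarrow> bool" where
  "smooth_on f I \<longleftrightarrow> (\<forall>k. \<forall>t\<in>I. ((deriv ^^ k) f) differentiable (at t))"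

definition open_interval :: "real set \<Rightarrow> bool" where
  "open_interval I \<longleftrightarrow> is_interval I \<and> open I \<and> I \<noteq> {}"

type_synonym surf = "real \<Rightarrow> real \<Rightarrow> real^4"

definition Xu :: "surf \<Rightarrow> surf" where
  "Xu X u v = vector_derivative (\<lambda>s. X s v) (at u)"
definition Xv :: "surf \<Rightarrow> surf" where
  "Xv X u v = vector_derivative (\<lambda>t. X u t) (at v)"

definition coefE :: "surf \<Rightarrow> real \<Rightarrow> real \<Rightarrow> real" where
  "coefE X u v = Xu X u v \<bullet> Xu X u v"
definition coefF :: "surf \<Rightarrow> real \<Rightarrow> real \<Rightarrow> real" where
  "coefF X u v = Xu X u v \<bullet> Xv X u v"
definition coefG :: "surf \<Rightarrow> real \<Rightarrow> real \<Rightarrow> real" where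
  "coefG X u v = Xv X u v \<bullet> Xv X u v"
definition Wsq :: "surf \<Rightarrow> real \<Rightarrow> real \<Rightarrow> real" where
  "Wsq X u v = coefE X u v * coefG X u v - (coefF X u v)^2"

definition normal_part :: "surf \<Rightarrow> real \<Rightarrow> real \<Rightarrow> real^4 \<Rightarrow> real^4" where
  "normal_part X u v w = (THE n. n \<bullet> Xu X u v = 0 \<and> n \<bullet> Xv X u v = 0 \<and>
       w - n \<in> span {Xu X u v, Xv X u v})"

definition h_uu :: "surf \<Rightarrow> real \<Rightarrow> real \<Rightarrow> real^4" where
  "h_uu X u v = normal_part X u v (vector_derivative (\<lambda>s. Xu X s v) (at u))"
definition h_uv :: "surf \<Rightarrow> real \<Rightarrow> real \<Rightarrow> real^4" where
  "h_uv X u v = normal_part X u v (vector_derivative (\<lambda>t. Xu X u t) (at v))"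
definition h_vv :: "surf \<Rightarrow> real \<Rightarrow> real \<Rightarrow> real^4" where
  "h_vv X u v = normal_part X u v (vector_derivative (\<lambda>t. Xv X u t) (at v))"

definition mean_curv :: "surf \<Rightarrow> real \<Rightarrow> real \<Rightarrow> real^4" where
  "mean_curv X u v = (1 / (2 * Wsq X u v)) *\<^sub>R
     (coefE X u v *\<^sub>R h_vv X u v - (2 * coefF X u v) *\<^sub>R h_uv X u v
      + coefG X u v *\<^sub>R h_uu X u v)"

definition curv :: "(real \<Rightarrow> real^4) \<Rightarrow> real \<Rightarrow> real" where
  "curv \<gamma> u = norm (vector_derivative (\<lambda>s. vector_derivative \<gamma> (at s)) (at u))"

end

theory Submission
  imports Defs
begin

text \<open>
  By the addition theorems the surface is X(u,v) = (x1 u, x2 u, cos (\<phi> u + v), sin (\<phi> u + v)),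
  so all its derivatives are explicit.  Its first fundamental form is E = G = 1, F = \<phi>'.
  The vectors X_uv and X_vv are already normal, while X_uu loses a tangential component
  that is computed from unit speed of the profile curve and the orthogonality of its velocity
  and acceleration.  This gives
  |H|^2 = (x1''^2 + x2''^2 - \<phi>'^2 \<phi>''^2 / (1 - \<phi>'^2)) / (4 (1 - \<phi>'^2)^2) + 1/4.
  The profile curve is the parameter line v = 0, so its curvature is the norm of X_uu there,
  \<kappa>^2 = x1''^2 + x2''^2 + \<phi>'^4 + \<phi>''^2, and the claimed formula is a rearrangement.
\<close>

lemma vector_4 [simp]:
  "(vector [x, y, z, w] :: 'a::zero^4) $ 1 = x"
  "(vector [x, y, z, w] :: 'a::zero^4) $ 2 = y"
  "(vector [x, y, z, w] :: 'a::zero^4) $ 3 = z"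
  "(vector [x, y, z, w] :: 'a::zero^4) $ 4 = w"
  unfolding vector_def by simp_all

lemma inner_vector_4:
  "(vector [a, b, c, d] :: real^4) \<bullet> vector [e, f, g, h] = a * e + b * f + c * g + d * h"
  by (simp add: inner_vec_def sum_4)

lemma vector_4_arith:
  "(vector [a, b, c, d] :: real^4) + vector [e, f, g, h] = vector [a + e, b + f, c + g, d + h]"
  "(vector [a, b, c, d] :: real^4) - vector [e, f, g, h] = vector [a - e, b - f, c - g, d - h]"
  "r *\<^sub>R (vector [a, b, c, d] :: real^4) = vector [r * a, r * b, r * c, r * d]"
  by (simp_all add: vec_eq_iff forall_4)

lemma has_vector_derivative_vector_4:
  assumes "(f1 has_real_derivative d1) (at s)" "(f2 has_real_derivative d2) (at s)"
    and "(f3 has_real_derivative d3) (at s)" "(f4 has_real_derivative d4) (at s)"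
  shows "((\<lambda>s. vector [f1 s, f2 s, f3 s, f4 s] :: real^4)
           has_vector_derivative vector [d1, d2, d3, d4]) (at s)"
proof -
  have basis: "(vector [a, b, c, d] :: real^4) =
      a *\<^sub>R vector [1, 0, 0, 0] + b *\<^sub>R vector [0, 1, 0, 0]
    + c *\<^sub>R vector [0, 0, 1, 0] + d *\<^sub>R vector [0, 0, 0, 1]" for a b c d
    by (simp add: vec_eq_iff forall_4)
  have "((\<lambda>s. f1 s *\<^sub>R (vector [1, 0, 0, 0] :: real^4) + f2 s *\<^sub>R vector [0, 1, 0, 0]
      + f3 s *\<^sub>R vector [0, 0, 1, 0] + f4 s *\<^sub>R vector [0, 0, 0, 1])
    has_vector_derivative (d1 *\<^sub>R vector [1, 0, 0, 0] + d2 *\<^sub>R vector [0, 1, 0, 0]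
      + d3 *\<^sub>R vector [0, 0, 1, 0] + d4 *\<^sub>R vector [0, 0, 0, 1])) (at s)"
    by (rule derivative_eq_intros assms has_vector_derivative_const refl | simp)+
  then show ?thesis by (subst (1 2) basis) simp
qed

lemma normal_part_eqI:
  assumes "n \<bullet> Xu X u v = 0" and "n \<bullet> Xv X u v = 0"
    and "w - n = \<alpha> *\<^sub>R Xu X u v + \<beta> *\<^sub>R Xv X u v"
  shows "normal_part X u v w = n"
  unfolding normal_part_def
proof (rule the_equality)
  let ?T = "span {Xu X u v, Xv X u v}"
  have tangent: "w - n \<in> ?T"
    unfolding assms(3) by (intro span_add span_mul span_base) auto
  then show "n \<bullet> Xu X u v = 0 \<and> n \<bullet> Xv X u v = 0 \<and> w - n \<in> ?T"
    using assms by auto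
  fix m assume m: "m \<bullet> Xu X u v = 0 \<and> m \<bullet> Xv X u v = 0 \<and> w - m \<in> ?T"
  have "m - n = (w - n) - (w - m)" by simp
  also have "\<dots> \<in> ?T" using tangent m by (intro span_diff[of "w - n" _ "w - m"]) auto
  finally have "orthogonal (m - n) (m - n)"
    by (rule orthogonal_to_span) (use m assms in \<open>auto simp: orthogonal_def inner_diff_left\<close>)
  then show "m = n" by (simp add: orthogonal_def)
qed

context
  fixes X :: surf and u v a1 a2 b1 b2 p q \<theta> :: real
  assumes Xu_eq: "Xu X u v = vector [a1, a2, - p * sin \<theta>, p * cos \<theta>]"
    and Xv_eq: "Xv X u v = vector [0, 0, - sin \<theta>, cos \<theta>]"
    and Xuu_eq: "vector_derivative (\<lambda>s. Xu X s v) (at u) =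
      vector [b1, b2, - (p\<^sup>2 * cos \<theta> + q * sin \<theta>), q * cos \<theta> - p\<^sup>2 * sin \<theta>]"
    and Xuv_eq: "vector_derivative (\<lambda>t. Xu X u t) (at v) = vector [0, 0, - p * cos \<theta>, - p * sin \<theta>]"
    and Xvv_eq: "vector_derivative (\<lambda>t. Xv X u t) (at v) = vector [0, 0, - cos \<theta>, - sin \<theta>]"
    and unit_speed: "a1\<^sup>2 + a2\<^sup>2 + p\<^sup>2 = 1"
    and speed_orthogonal: "a1 * b1 + a2 * b2 + p * q = 0"
    and non_null: "1 - p\<^sup>2 \<noteq> 0"
begin

lemma first_fundamental_form: "coefE X u v = 1" "coefF X u v = p" "coefG X u v = 1"
  unfolding coefE_def coefF_def coefG_def Xu_eq Xv_eq inner_vector_4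
  using unit_speed sin_cos_squared_add[of \<theta>] by algebra+

lemma second_fundamental_form_v:
  "h_uv X u v = vector [0, 0, - p * cos \<theta>, - p * sin \<theta>]"
  "h_vv X u v = vector [0, 0, - cos \<theta>, - sin \<theta>]"
  unfolding h_uv_def h_vv_def Xuv_eq Xvv_eq
  by (rule normal_part_eqI[where \<alpha> = 0 and \<beta> = 0];
      simp add: Xu_eq Xv_eq inner_vector_4 vector_4_arith algebra_simps vec_eq_iff forall_4)+

lemma second_fundamental_form_uu:
  defines "k \<equiv> p * q / (1 - p\<^sup>2)"
  shows "h_uu X u v = vector [b1 + k * a1, b2 + k * a2, - p\<^sup>2 * cos \<theta>, - p\<^sup>2 * sin \<theta>]"
  unfolding h_uu_def Xuu_eq
  \<comment> \<open>the tangential part -k X_u + (k p + q) X_v solves the Gram system with E = G = 1, F = p\<close>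
proof (rule normal_part_eqI[where \<alpha> = "- k" and \<beta> = "k * p + q"])
  have "k * (1 - p\<^sup>2) = p * q" using non_null by (simp add: k_def)
  then have "(b1 + k * a1) * a1 + (b2 + k * a2) * a2 = 0"
    using unit_speed speed_orthogonal by algebra
  then show "vector [b1 + k * a1, b2 + k * a2, - p\<^sup>2 * cos \<theta>, - p\<^sup>2 * sin \<theta>] \<bullet> Xu X u v = 0"
    unfolding Xu_eq inner_vector_4 by (simp add: algebra_simps power2_eq_square)
  show "vector [b1 + k * a1, b2 + k * a2, - p\<^sup>2 * cos \<theta>, - p\<^sup>2 * sin \<theta>] \<bullet> Xv X u v = 0"
    unfolding Xv_eq inner_vector_4 by (simp add: algebra_simps)
  show "vector [b1, b2, - (p\<^sup>2 * cos \<theta> + q * sin \<theta>), q * cos \<theta> - p\<^sup>2 * sin \<theta>]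
      - vector [b1 + k * a1, b2 + k * a2, - p\<^sup>2 * cos \<theta>, - p\<^sup>2 * sin \<theta>]
      = - k *\<^sub>R Xu X u v + (k * p + q) *\<^sub>R Xv X u v"
    unfolding Xu_eq Xv_eq vector_4_arith by (simp add: algebra_simps power2_eq_square)
qed

lemma norm_mean_curv_squared:
  "(norm (mean_curv X u v))\<^sup>2 = (b1\<^sup>2 + b2\<^sup>2 - p\<^sup>2 * q\<^sup>2 / (1 - p\<^sup>2)) / (4 * (1 - p\<^sup>2)\<^sup>2) + 1 / 4"
proof -
  define w where "w = 1 - p\<^sup>2"
  define k where "k = p * q / w"
  have w: "w \<noteq> 0" using non_null by (simp add: w_def)
  have "mean_curv X u v =
      (1 / (2 * w)) *\<^sub>R vector [b1 + k * a1, b2 + k * a2, - w * cos \<theta>, - w * sin \<theta>]"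
    unfolding mean_curv_def Wsq_def first_fundamental_form second_fundamental_form_v
      second_fundamental_form_uu k_def w_def
    by (simp add: vector_4_arith algebra_simps power2_eq_square)
  moreover have "(norm (vector [b1 + k * a1, b2 + k * a2, - w * cos \<theta>, - w * sin \<theta>] :: real^4))\<^sup>2
      = (b1 + k * a1)\<^sup>2 + (b2 + k * a2)\<^sup>2 + w\<^sup>2"
    unfolding power2_norm_eq_inner inner_vector_4 using sin_cos_squared_add[of \<theta>] by algebra
  ultimately have "(norm (mean_curv X u v))\<^sup>2 = ((b1 + k * a1)\<^sup>2 + (b2 + k * a2)\<^sup>2) / (4 * w\<^sup>2) + 1 / 4"
    using w by (simp add: power_mult_distrib field_simps)
  also have "(b1 + k * a1)\<^sup>2 + (b2 + k * a2)\<^sup>2 = b1\<^sup>2 + b2\<^sup>2 - p\<^sup>2 * q\<^sup>2 / w"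
  proof -
    have "(b1 + k * a1)\<^sup>2 + (b2 + k * a2)\<^sup>2
        = b1\<^sup>2 + b2\<^sup>2 + 2 * k * (a1 * b1 + a2 * b2) + k\<^sup>2 * (a1\<^sup>2 + a2\<^sup>2)"
      by algebra
    also have "\<dots> = b1\<^sup>2 + b2\<^sup>2 - 2 * k * (p * q) + k\<^sup>2 * w"
      using unit_speed speed_orthogonal unfolding w_def by algebra
    also have "\<dots> = b1\<^sup>2 + b2\<^sup>2 - p\<^sup>2 * q\<^sup>2 / w"
      using w by (simp add: k_def field_simps power2_eq_square)
    finally show ?thesis .
  qed
  finally show ?thesis by (simp add: w_def)
qed

end

definition rot_surface :: "(real \<Rightarrow> real) \<Rightarrow> (real \<Rightarrow> real) \<Rightarrow> (real \<Rightarrow> real) \<Rightarrow> surf" where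
  "rot_surface x1 x2 \<phi> u v = vector [x1 u, x2 u, cos (\<phi> u + v), sin (\<phi> u + v)]"

definition twice_differentiable_on :: "(real \<Rightarrow> real) \<Rightarrow> real set \<Rightarrow> bool" where
  "twice_differentiable_on f I \<longleftrightarrow> (\<forall>t\<in>I. f differentiable (at t) \<and> deriv f differentiable (at t))"

lemma smooth_on_imp_twice_differentiable_on:
  "smooth_on f I \<Longrightarrow> twice_differentiable_on f I"
  unfolding smooth_on_def twice_differentiable_on_def
  by (metis funpow_0 funpow_simps_right(1) funpow_simps_right(2) o_apply One_nat_def)

lemma twice_differentiable_onD:
  assumes "twice_differentiable_on f I" and "t \<in> I"
  shows "(f has_real_derivative deriv f t) (at t)"
    and "(deriv f has_real_derivative deriv (deriv f) t) (at t)"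
  using assms by (simp_all add: twice_differentiable_on_def DERIV_deriv_iff_real_differentiable)

lemma unit_sum_squares_deriv_orthogonal:
  assumes "open I" and "u \<in> I" and "\<forall>s\<in>I. (f s)\<^sup>2 + (g s)\<^sup>2 + (h s)\<^sup>2 = 1"
    and "(f has_real_derivative f') (at u)" "(g has_real_derivative g') (at u)"
    and "(h has_real_derivative h') (at u)"
  shows "f u * f' + g u * g' + h u * h' = 0"
proof -
  have "((\<lambda>s. (f s)\<^sup>2 + (g s)\<^sup>2 + (h s)\<^sup>2) has_real_derivative
      2 * (f u * f' + g u * g' + h u * h')) (at u)"
    using assms(4-6) by (auto intro!: derivative_eq_intros simp: algebra_simps)
  moreover have "((\<lambda>s. (f s)\<^sup>2 + (g s)\<^sup>2 + (h s)\<^sup>2) has_real_derivative 0) (at u)"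
    using assms(1-3) by (intro has_field_derivative_transform_within_open[OF DERIV_const]) auto
  ultimately show ?thesis using DERIV_unique by fastforce
qed

lemma Xv_rot_surface:
  "Xv (rot_surface x1 x2 \<phi>) u v = vector [0, 0, - sin (\<phi> u + v), cos (\<phi> u + v)]"
  unfolding Xv_def rot_surface_def
  by (rule vector_derivative_at, rule has_vector_derivative_vector_4)
    (auto intro!: derivative_eq_intros)

lemma Xvv_rot_surface:
  "vector_derivative (\<lambda>t. Xv (rot_surface x1 x2 \<phi>) u t) (at v)
     = vector [0, 0, - cos (\<phi> u + v), - sin (\<phi> u + v)]"
  unfolding Xv_rot_surface
  by (rule vector_derivative_at, rule has_vector_derivative_vector_4)
    (auto intro!: derivative_eq_intros)

context
  fixes I :: "real set" and x1 x2 \<phi> :: "real \<Rightarrow> real"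
  assumes open_I: "open I"
    and twice_differentiable: "twice_differentiable_on x1 I" "twice_differentiable_on x2 I"
      "twice_differentiable_on \<phi> I"
begin

lemmas profile_has_real_derivative = twice_differentiable[THEN twice_differentiable_onD(1)]
  twice_differentiable[THEN twice_differentiable_onD(2)]

lemma Xu_rot_surface:
  "s \<in> I \<Longrightarrow> Xu (rot_surface x1 x2 \<phi>) s t =
     vector [deriv x1 s, deriv x2 s, - deriv \<phi> s * sin (\<phi> s + t), deriv \<phi> s * cos (\<phi> s + t)]"
  unfolding Xu_def rot_surface_def
  by (rule vector_derivative_at, rule has_vector_derivative_vector_4)
    (auto intro!: derivative_eq_intros profile_has_real_derivative)

lemma Xuv_rot_surface:
  "u \<in> I \<Longrightarrow> vector_derivative (\<lambda>t. Xu (rot_surface x1 x2 \<phi>) u t) (at v)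
     = vector [0, 0, - deriv \<phi> u * cos (\<phi> u + v), - deriv \<phi> u * sin (\<phi> u + v)]"
  unfolding Xu_rot_surface
  by (rule vector_derivative_at, rule has_vector_derivative_vector_4)
    (auto intro!: derivative_eq_intros)

lemma Xuu_rot_surface:
  assumes "u \<in> I"
  shows "vector_derivative (\<lambda>s. Xu (rot_surface x1 x2 \<phi>) s v) (at u) =
    vector [deriv (deriv x1) u, deriv (deriv x2) u,
      - ((deriv \<phi> u)\<^sup>2 * cos (\<phi> u + v) + deriv (deriv \<phi>) u * sin (\<phi> u + v)),
      deriv (deriv \<phi>) u * cos (\<phi> u + v) - (deriv \<phi> u)\<^sup>2 * sin (\<phi> u + v)]"
  by (rule vector_derivative_at,
      rule has_vector_derivative_transform_within_open[OF _ open_I assms Xu_rot_surface[symmetric]],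
      rule has_vector_derivative_vector_4)
    (auto intro!: derivative_eq_intros profile_has_real_derivative assms simp: algebra_simps power2_eq_square)

lemma norm_Xuu_rot_surface_squared:
  "u \<in> I \<Longrightarrow> (norm (vector_derivative (\<lambda>s. Xu (rot_surface x1 x2 \<phi>) s 0) (at u)))\<^sup>2
      = (deriv (deriv x1) u)\<^sup>2 + (deriv (deriv x2) u)\<^sup>2 + (deriv (deriv \<phi>) u)\<^sup>2 + (deriv \<phi> u) ^ 4"
  unfolding Xuu_rot_surface power2_norm_eq_inner inner_vector_4 add_0_right
  using sin_cos_squared_add[of "\<phi> u"] by algebra

lemma norm_mean_curv_rot_surface_squared:
  assumes unit_speed: "\<forall>s\<in>I. (deriv x1 s)\<^sup>2 + (deriv x2 s)\<^sup>2 + (deriv \<phi> s)\<^sup>2 = 1"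
    and u: "u \<in> I" and non_null: "1 - (deriv \<phi> u)\<^sup>2 \<noteq> 0"
  shows "(norm (mean_curv (rot_surface x1 x2 \<phi>) u v))\<^sup>2
    = ((deriv (deriv x1) u)\<^sup>2 + (deriv (deriv x2) u)\<^sup>2
        - (deriv \<phi> u)\<^sup>2 * (deriv (deriv \<phi>) u)\<^sup>2 / (1 - (deriv \<phi> u)\<^sup>2))
      / (4 * (1 - (deriv \<phi> u)\<^sup>2)\<^sup>2) + 1 / 4"
proof (rule norm_mean_curv_squared[OF Xu_rot_surface[OF u] Xv_rot_surface Xuu_rot_surface[OF u]
      Xuv_rot_surface[OF u] Xvv_rot_surface _ _ non_null])
  show "(deriv x1 u)\<^sup>2 + (deriv x2 u)\<^sup>2 + (deriv \<phi> u)\<^sup>2 = 1" using unit_speed u by blast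
  show "deriv x1 u * deriv (deriv x1) u + deriv x2 u * deriv (deriv x2) u
      + deriv \<phi> u * deriv (deriv \<phi>) u = 0"
    using unit_speed by (intro unit_sum_squares_deriv_orthogonal[OF open_I u] profile_has_real_derivative u)
qed

end

lemma rotation_eq_rot_surface:
  "(\<lambda>u v. vector [x1 u, x2 u, cos (\<phi> u) * cos v - sin (\<phi> u) * sin v,
      cos (\<phi> u) * sin v + sin (\<phi> u) * cos v]) = rot_surface x1 x2 \<phi>"
  by (auto simp: rot_surface_def cos_add sin_add fun_eq_iff algebra_simps)

lemma curv_profile_eq:
  "curv (\<lambda>s. vector [x1 s, x2 s, cos (\<phi> s), sin (\<phi> s)]) u
     = norm (vector_derivative (\<lambda>s. Xu (rot_surface x1 x2 \<phi>) s 0) (at u))"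
  by (simp add: curv_def Xu_def rot_surface_def)

lemma rearrange_mean_curvature_formula:
  fixes b p q :: real
  assumes "1 - p\<^sup>2 \<noteq> 0"
  shows "(b - p\<^sup>2 * q\<^sup>2 / (1 - p\<^sup>2)) / (4 * (1 - p\<^sup>2)\<^sup>2) + 1 / 4
    = 1 / (4 * (1 - p\<^sup>2)\<^sup>2) * ((b + q\<^sup>2 + p ^ 4) + 1 - 2 * p\<^sup>2 - q\<^sup>2 / (1 - p\<^sup>2))"
  using assms by (simp add: field_simps) algebra

theorem proposition2:
  fixes I :: "real set" and x1 x2 \<phi> :: "real \<Rightarrow> real"
  assumes "open_interval I"
    and "smooth_on x1 I" and "smooth_on x2 I" and "smooth_on \<phi> I"
    and "\<forall>u\<in>I. (deriv x1 u)^2 + (deriv x2 u)^2 + (deriv \<phi> u)^2 = 1"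
    and "\<forall>u\<in>I. 1 - (deriv \<phi> u)^2 \<noteq> 0"
  shows "\<forall>u\<in>I. \<forall>v.
    (norm (mean_curv (\<lambda>u v. vector [x1 u, x2 u,
              cos (\<phi> u) * cos v - sin (\<phi> u) * sin v,
              cos (\<phi> u) * sin v + sin (\<phi> u) * cos v]) u v))^2
    = 1 / (4 * (1 - (deriv \<phi> u)^2)^2) *
      ((curv (\<lambda>s. vector [x1 s, x2 s, cos (\<phi> s), sin (\<phi> s)]) u)^2 + 1
       - 2 * (deriv \<phi> u)^2 - (deriv (deriv \<phi>) u)^2 / (1 - (deriv \<phi> u)^2))"
proof -
  have "open I" using assms(1) by (simp add: open_interval_def)
  note rot_surface_hyps = this assms(2-4)[THEN smooth_on_imp_twice_differentiable_on]
  show ?thesis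
    using assms(5,6) unfolding rotation_eq_rot_surface curv_profile_eq
    by (simp add: norm_mean_curv_rot_surface_squared[OF rot_surface_hyps]
        norm_Xuu_rot_surface_squared[OF rot_surface_hyps] rearrange_mean_curvature_formula)
qed

end
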